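(* (1) In $\mathcal{N}ec$, every morphism $\varphi$ from $(n_1,\dots,n_k)$ to $(m)$ decomposes uniquely as $\varphi=\varphi_1*\dots*\varphi_k$, where each $\varphi_i:\square^{n_i}\to\square^m$ is a morphism of cubical sets (i.e. of $\square$) and $\varphi_1(\alpha)=\alpha$, $\varphi_i(\omega)=\varphi_{i+1}(\alpha)$ for $1\le i\le k-1$, and $\varphi_k(\omega)=\omega$. In particular $m\le n_1+\dots+n_k$. (2) Given a morphism $f:(n_1,\dots,n_k)\to(m_1,\dots,m_l)$ in $\mathcal{N}ec$, there exist a decomposition $(A_1,\dots,A_l)$ of the sequence $(n_1,\dots,n_k)$ into $l$ blocks and morphisms $f_j:A_j\to(m_j)$ in $\mathcal{N}ec$ such that $f=f_1\vee\dots\vee f_l$. This decomposition is unique if, for every $1\le i\le k$, the restriction of $f$ to the $i$-th bead $\square^{n_i}$ is not constant.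
   Context: Cubical sets: presheaves on the category $\square$ with objects $[1]^n$ and morphisms generated by faces $\partial_{i,\epsilon}$ (insert $\epsilon$ at coordinate $i$), degeneracies (delete a coordinate) and negative connections ($\gamma_{i,0}$ replaces $(x_i,x_{i+1})$ by $\max(x_i,x_{i+1})$); $\square^n$ is representable, with vertices the subsets of $\{1,\dots,n\}$, $\alpha=\emptyset$, $\omega=\{1,\dots,n\}$. Double-pointed cubical sets $X_{a,b}$ are cubical sets with two chosen vertices; morphisms preserve both. For $X_{a,b},Y_{u,v}$, $X\vee Y$ is the pushout identifying $b$ with $u$, pointed by $(a,v)$; for double-pointed maps $f,g$, $f\vee g$ is the induced map on wedges. For a cubical set $X$ with vertices $u,v,w$ and maps $f:S_{a,b}\to X_{u,v}$, $g:T_{a',b'}\to X_{v,w}$, $f*g:(S\vee T)_{a,b'}\to X_{u,w}$ is the induced map from the pushout. A necklace, identified with the sequence $(n_1,\dots,n_k)$ of positive integers, is $\square^{n_1}\vee\dots\vee\square^{n_k}$ pointed by the $\alpha$ of the first and the $\omega$ of the last cube; its $i$-th bead is the canonical map $\square^{n_i}\to T$. $\mathcal{N}ec$ is the full subcategory of double-pointed cubical sets on necklaces. A decomposition of a nonempty sequence $(n_1,\dots,n_k)$ into $l$ blocks is a tuple $(A_1,\dots,A_l)$ of nonempty sequences whose concatenation is $(n_1,\dots,n_k)$; each $A_j$ is regarded as a necklace. *)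

theory Defs
  imports "HOL-Library.FuncSet"
begin

text \<open>A vertex of [1]^n is a boolean list of length n (coordinate i true iff i is in the
subset). A morphism [1]^n -> [1]^m of the cube category is represented by its (extensional)
action on vertices; the category is a subcategory of posets, so this is faithful.\<close>

type_synonym cube = "bool list \<Rightarrow> bool list"

definition verts :: "nat \<Rightarrow> bool list set" where
  "verts n = {xs. length xs = n}"

text \<open>Generators, 1-indexed coordinates as in the paper.\<close>
definition ins_coord :: "nat \<Rightarrow> bool \<Rightarrow> bool list \<Rightarrow> bool list" where
  "ins_coord i e xs = take (i - 1) xs @ e # drop (i - 1) xs"

definition del_coord :: "nat \<Rightarrow> bool list \<Rightarrow> bool list" where
  "del_coord i xs = take (i - 1) xs @ drop i xs"

definition conn_coord :: "nat \<Rightarrow> bool list \<Rightarrow> bool list" where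
  "conn_coord i xs = take (i - 1) xs @ (xs ! (i - 1) \<or> xs ! i) # drop (i + 1) xs"

inductive cmor :: "nat \<Rightarrow> nat \<Rightarrow> cube \<Rightarrow> bool" where
  cmor_id: "cmor n n (restrict id (verts n))"
| cmor_face: "1 \<le> i \<Longrightarrow> i \<le> Suc n \<Longrightarrow> cmor n (Suc n) (restrict (ins_coord i e) (verts n))"
| cmor_degen: "1 \<le> i \<Longrightarrow> i \<le> Suc n \<Longrightarrow> cmor (Suc n) n (restrict (del_coord i) (verts (Suc n)))"
| cmor_conn: "1 \<le> i \<Longrightarrow> i \<le> n \<Longrightarrow> cmor (Suc n) n (restrict (conn_coord i) (verts (Suc n)))"
| cmor_comp: "cmor n m f \<Longrightarrow> cmor m p g \<Longrightarrow> cmor n p (compose (verts n) g f)"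

definition alpha_v :: "nat \<Rightarrow> bool list" where "alpha_v n = replicate n False"
definition omega_v :: "nat \<Rightarrow> bool list" where "omega_v n = replicate n True"

definition constk :: "nat \<Rightarrow> bool list \<Rightarrow> cube" where
  "constk k v = restrict (\<lambda>_. v) (verts k)"

text \<open>A cubical set: cells in each dimension, and for a cube morphism psi : [1]^k' -> [1]^k
the action  act k' k psi : cells k -> cells k'.\<close>
record 'a cset =
  cells :: "nat \<Rightarrow> 'a set"
  act :: "nat \<Rightarrow> nat \<Rightarrow> cube \<Rightarrow> 'a \<Rightarrow> 'a"

definition cs_hom :: "'a cset \<Rightarrow> 'b cset \<Rightarrow> (nat \<Rightarrow> 'a \<Rightarrow> 'b) \<Rightarrow> bool" where
  "cs_hom X Y F \<longleftrightarrow>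
     (\<forall>k x. x \<in> cells X k \<longrightarrow> F k x \<in> cells Y k) \<and>
     (\<forall>k k' psi x. cmor k' k psi \<longrightarrow> x \<in> cells X k \<longrightarrow>
         F k' (act X k' k psi x) = act Y k' k psi (F k x))"

definition dp_hom :: "'a cset \<Rightarrow> 'a \<Rightarrow> 'a \<Rightarrow> 'b cset \<Rightarrow> 'b \<Rightarrow> 'b \<Rightarrow> (nat \<Rightarrow> 'a \<Rightarrow> 'b) \<Rightarrow> bool" where
  "dp_hom X a b Y u v F \<longleftrightarrow> cs_hom X Y F \<and> F 0 a = u \<and> F 0 b = v"

text \<open>The necklace (n_1,...,n_k) = cube^{n_1} v ... v cube^{n_k}, with its pushout computed
dimensionwise: a k-cell is (i, phi) with phi a k-cube of the i-th bead (beads 0-indexed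
internally), where the constant cube at the omega of bead i (i not last) is identified with
the constant cube at the alpha of bead i+1; we use the latter as canonical representative.\<close>

definition nec_norm :: "nat list \<Rightarrow> nat \<Rightarrow> nat \<times> cube \<Rightarrow> nat \<times> cube" where
  "nec_norm ns k x =
     (if Suc (fst x) < length ns \<and> snd x = constk k (omega_v (ns ! fst x))
      then (Suc (fst x), constk k (alpha_v (ns ! Suc (fst x)))) else x)"

definition nec_cells :: "nat list \<Rightarrow> nat \<Rightarrow> (nat \<times> cube) set" where
  "nec_cells ns k = {(i, phi). i < length ns \<and> cmor k (ns ! i) phi \<and>
      \<not> (Suc i < length ns \<and> phi = constk k (omega_v (ns ! i)))}"

definition necklace :: "nat list \<Rightarrow> (nat \<times> cube) cset" where
  "necklace ns = \<lparr> cells = nec_cells ns,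
      act = (\<lambda>k' k psi x. nec_norm ns k' (fst x, compose (verts k') (snd x) psi)) \<rparr>"

definition nec_alpha :: "nat list \<Rightarrow> nat \<times> cube" where
  "nec_alpha ns = (0, constk 0 (alpha_v (ns ! 0)))"

definition nec_omega :: "nat list \<Rightarrow> nat \<times> cube" where
  "nec_omega ns = (length ns - 1, constk 0 (omega_v (last ns)))"

definition nec_mor :: "nat list \<Rightarrow> nat list \<Rightarrow> (nat \<Rightarrow> nat \<times> cube \<Rightarrow> nat \<times> cube) \<Rightarrow> bool" where
  "nec_mor ns ms F \<longleftrightarrow>
     dp_hom (necklace ns) (nec_alpha ns) (nec_omega ns) (necklace ms) (nec_alpha ms) (nec_omega ms) F"

definition nec_agree :: "nat list \<Rightarrow> (nat \<Rightarrow> nat \<times> cube \<Rightarrow> 'b) \<Rightarrow> (nat \<Rightarrow> nat \<times> cube \<Rightarrow> 'b) \<Rightarrow> bool" where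
  "nec_agree ns F G \<longleftrightarrow> (\<forall>k. \<forall>x \<in> nec_cells ns k. F k x = G k x)"

definition bead :: "nat list \<Rightarrow> nat \<Rightarrow> nat \<Rightarrow> cube \<Rightarrow> nat \<times> cube" where
  "bead ns i k psi = nec_norm ns k (i, psi)"

text \<open>phi_1 * ... * phi_k : necklace ns -> cube^m = necklace [m], the map induced from the
pushout by the maps phi_i : cube^{n_i} -> cube^m (Yoneda: a cube morphism [1]^{n_i} -> [1]^m);
on bead i it is phi_i.\<close>
definition star_maps :: "cube list \<Rightarrow> nat \<Rightarrow> nat \<times> cube \<Rightarrow> nat \<times> cube" where
  "star_maps phis k x = (0, compose (verts k) (phis ! fst x) (snd x))"

definition is_decomp :: "nat list \<Rightarrow> nat \<Rightarrow> nat list list \<Rightarrow> bool" where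
  "is_decomp ns l As \<longleftrightarrow> length As = l \<and> (\<forall>A \<in> set As. A \<noteq> []) \<and> concat As = ns"

definition blk_off :: "nat list list \<Rightarrow> nat \<Rightarrow> nat" where
  "blk_off As j = sum_list (map length (take j As))"

definition blk_of :: "nat list list \<Rightarrow> nat \<Rightarrow> nat" where
  "blk_of As i = (LEAST j. i < blk_off As (Suc j))"

text \<open>f_1 v ... v f_l : necklace (concat As) -> necklace ms for f_j : A_j -> (m_j):
on the beads of block j it is (j-th bead of ms) o f_j.\<close>
definition wedge_maps :: "nat list list \<Rightarrow> nat list \<Rightarrow> (nat \<Rightarrow> nat \<times> cube \<Rightarrow> nat \<times> cube) list
    \<Rightarrow> nat \<Rightarrow> nat \<times> cube \<Rightarrow> nat \<times> cube" where
  "wedge_maps As ms fs k x =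
     (let j = blk_of As (fst x) in
      bead ms j k (snd ((fs ! j) k (fst x - blk_off As j, snd x))))"

definition to_point :: "nat \<Rightarrow> cube" where
  "to_point k = restrict (\<lambda>_. []) (verts k)"

text \<open>The restriction of F : necklace ns -> necklace ms to the i-th bead is constant,
i.e. factors through a single vertex v.\<close>
definition bead_restr_const :: "nat list \<Rightarrow> nat list \<Rightarrow> (nat \<Rightarrow> nat \<times> cube \<Rightarrow> nat \<times> cube) \<Rightarrow> nat \<Rightarrow> bool" where
  "bead_restr_const ns ms F i \<longleftrightarrow>
     (\<exists>v \<in> nec_cells ms 0. \<forall>k psi. cmor k (ns ! i) psi \<longrightarrow>
        F k (bead ns i k psi) = act (necklace ms) k 0 (to_point k) v)"

definition wedge_decomp :: "nat list \<Rightarrow> nat list \<Rightarrow> (nat \<Rightarrow> nat \<times> cube \<Rightarrow> nat \<times> cube)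
    \<Rightarrow> nat list list \<Rightarrow> (nat \<Rightarrow> nat \<times> cube \<Rightarrow> nat \<times> cube) list \<Rightarrow> bool" where
  "wedge_decomp ns ms F As fs \<longleftrightarrow>
     is_decomp ns (length ms) As \<and> length fs = length ms \<and>
     (\<forall>j < length ms. nec_mor (As ! j) [ms ! j] (fs ! j)) \<and>
     nec_agree ns F (wedge_maps As ms fs)"

end

theory Submission
  imports Defs
begin

text \<open>A cell of a necklace is a cube map into one of its beads, so by Yoneda a map of necklaces
  \<open>F\<close> is determined by the images of the top cells of the beads, each a cube map into a single
  bead of the target. For a target cube \<open>\<box>\<^sup>m\<close> these images form a chain of cube maps
  from \<open>\<alpha>\<close> to \<open>\<omega>\<close>. Cube maps are monotone, and along a comparable pair of vertices
  they increase the number of true coordinates by at most as much as it increases in the source;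
  hence each map of the chain adds at most \<open>n\<^sub>i\<close> true coordinates, and
  \<open>m \<le> n\<^sub>1 + \<dots> + n\<^sub>k\<close>.

  For a general target, bead \<open>i\<close> lands in some target bead \<open>b(i)\<close>. Reassigning a bead
  that is mapped constantly onto a gluing vertex to the earlier of the two glued beads makes
  \<open>b\<close> start at the first bead, end at the last one and grow in steps of \<open>0\<close> or \<open>1\<close>;
  its fibres are the blocks \<open>A\<^sub>j\<close>, and the restrictions of \<open>F\<close> to them are the maps
  \<open>f\<^sub>j\<close>. If no bead is mapped constantly, \<open>b\<close> can be read off from \<open>F\<close>, so the
  blocks and the \<open>f\<^sub>j\<close> are unique.\<close>

section \<open>Cube maps are monotone and short\<close>

definition cube_id :: "nat \<Rightarrow> cube" where
  "cube_id n = restrict id (verts n)"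

lemma verts_iff [simp]: "x \<in> verts n \<longleftrightarrow> length x = n"
  by (simp add: verts_def)

lemma length_alpha_v [simp]: "length (alpha_v n) = n"
  and length_omega_v [simp]: "length (omega_v n) = n"
  by (simp_all add: alpha_v_def omega_v_def)

lemma count_alpha_v [simp]: "count_list (alpha_v n) True = 0"
  by (simp add: alpha_v_def)

lemma count_omega_v [simp]: "count_list (omega_v n) True = n"
  by (induction n) (simp_all add: omega_v_def)

lemma alpha_v_le: "length x = n \<Longrightarrow> list_all2 (\<le>) (alpha_v n) x"
  and le_omega_v: "length x = n \<Longrightarrow> list_all2 (\<le>) x (omega_v n)"
  by (simp_all add: alpha_v_def omega_v_def list_all2_conv_all_nth)

lemma le_alpha_v_iff: "list_all2 (\<le>) x (alpha_v n) \<longleftrightarrow> x = alpha_v n"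
  by (auto simp: alpha_v_def list_all2_conv_all_nth intro: nth_equalityI)

lemma omega_v_le_iff: "list_all2 (\<le>) (omega_v n) x \<longleftrightarrow> x = omega_v n"
  by (auto simp: omega_v_def list_all2_conv_all_nth intro: nth_equalityI)

lemma alpha_v_neq_omega_v: "0 < n \<Longrightarrow> alpha_v n \<noteq> omega_v n"
  by (cases n) (simp_all add: alpha_v_def omega_v_def)

lemma count_list_mono: "list_all2 (\<le>) x y \<Longrightarrow> count_list x True \<le> count_list y True"
  by (induction x y rule: list_all2_induct) auto

text \<open>For comparable vertices \<open>x \<le> y\<close> the difference of their numbers of true coordinates
  is their Hamming distance, so \<open>short_mono n f\<close> says that \<open>f\<close> is monotone and 1-Lipschitz on
  comparable pairs.\<close>
definition short_mono :: "nat \<Rightarrow> cube \<Rightarrow> bool" where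
  "short_mono n f \<longleftrightarrow> (\<forall>x y. length x = n \<longrightarrow> list_all2 (\<le>) x y \<longrightarrow>
     list_all2 (\<le>) (f x) (f y) \<and>
     count_list (f y) True + count_list x True \<le> count_list (f x) True + count_list y True)"

lemma short_monoD:
  "short_mono n f \<Longrightarrow> length x = n \<Longrightarrow> list_all2 (\<le>) x y \<Longrightarrow>
     list_all2 (\<le>) (f x) (f y) \<and>
     count_list (f y) True + count_list x True \<le> count_list (f x) True + count_list y True"
  unfolding short_mono_def by blast

lemma short_mono_compose:
  assumes f: "f \<in> verts n \<rightarrow> verts m" "short_mono n f" and g: "short_mono m g"
  shows "short_mono n (compose (verts n) g f)"
  unfolding short_mono_def
proof (intro allI impI)
  fix x y :: "bool list" assume x: "length x = n" and xy: "list_all2 (\<le>) x y"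
  have "length y = n" using x xy by (simp add: list_all2_lengthD)
  moreover have "length (f x) = m" using f(1) x by auto
  ultimately show "list_all2 (\<le>) (compose (verts n) g f x) (compose (verts n) g f y) \<and>
    count_list (compose (verts n) g f y) True + count_list x True
      \<le> count_list (compose (verts n) g f x) True + count_list y True"
    using short_monoD[OF f(2) x xy] short_monoD[OF g, of "f x" "f y"] x by (simp add: compose_def)
qed

text \<open>Each generator of the cube category rewrites only a window of \<open>w\<close> consecutive
  coordinates following the first \<open>p\<close>.\<close>
lemma short_mono_splice:
  assumes h: "short_mono w h" and pw: "p + w \<le> n"
    and f: "\<And>x. length x = n \<Longrightarrow> f x = take p x @ h (take w (drop p x)) @ drop (p + w) x"
  shows "short_mono n f"
  unfolding short_mono_def
proof (intro allI impI)
  fix x y :: "bool list" assume x: "length x = n" and xy: "list_all2 (\<le>) x y"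
  have y: "length y = n" using x xy by (simp add: list_all2_lengthD)
  have split: "z = take p z @ take w (drop p z) @ drop (p + w) z" for z :: "bool list"
    by (metis append_take_drop_id drop_drop add.commute)
  have "count_list x True = count_list (take p x) True + count_list (take w (drop p x)) True
      + count_list (drop (p + w) x) True"
    "count_list y True = count_list (take p y) True + count_list (take w (drop p y)) True
      + count_list (drop (p + w) y) True"
    by (metis split count_list_append add.assoc)+
  moreover have "count_list (take p x) True \<le> count_list (take p y) True"
    "count_list (drop (p + w) x) True \<le> count_list (drop (p + w) y) True"
    using xy by (simp_all add: count_list_mono)
  ultimately show "list_all2 (\<le>) (f x) (f y) \<and>
      count_list (f y) True + count_list x True \<le> count_list (f x) True + count_list y True"
    using short_monoD[OF h, of "take w (drop p x)" "take w (drop p y)"] x y pw xy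
    by (auto simp: f intro!: list_all2_appendI)
qed

lemma short_mono_face:
  assumes "1 \<le> i" "i \<le> Suc n" shows "short_mono n (restrict (ins_coord i e) (verts n))"
  by (rule short_mono_splice[where p = "i - 1" and w = 0 and h = "\<lambda>_. [e]"])
    (use assms in \<open>auto simp: short_mono_def ins_coord_def\<close>)

lemma short_mono_degen:
  assumes "1 \<le> i" "i \<le> Suc n" shows "short_mono (Suc n) (restrict (del_coord i) (verts (Suc n)))"
  by (rule short_mono_splice[where p = "i - 1" and w = 1 and h = "\<lambda>_. []"])
    (use assms in \<open>auto simp: short_mono_def del_coord_def count_list_mono\<close>)

lemma short_mono_conn:
  assumes "1 \<le> i" "i \<le> n" shows "short_mono (Suc n) (restrict (conn_coord i) (verts (Suc n)))"
proof (rule short_mono_splice[where p = "i - 1" and w = 2 and h = "\<lambda>u. [u ! 0 \<or> u ! 1]"])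
  show "short_mono 2 (\<lambda>u. [u ! 0 \<or> u ! 1])"
    unfolding short_mono_def
    by (auto simp: numeral_2_eq_2 length_Suc_conv list_all2_Cons1)
next
  fix x :: "bool list" assume "length x = Suc n"
  then have "drop (i - 1) x = x ! (i - 1) # x ! i # drop (Suc i) x"
    using assms Cons_nth_drop_Suc[of "i - 1" x] Cons_nth_drop_Suc[of i x] by simp
  then have "take 2 (drop (i - 1) x) = [x ! (i - 1), x ! i]"
    by (simp add: numeral_2_eq_2)
  then show "restrict (conn_coord i) (verts (Suc n)) x =
      take (i - 1) x @ [take 2 (drop (i - 1) x) ! 0 \<or> take 2 (drop (i - 1) x) ! 1] @ drop (i - 1 + 2) x"
    using assms \<open>length x = Suc n\<close> by (simp add: conn_coord_def)
qed (use assms in simp)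

lemma cmor_funcset: "cmor n m f \<Longrightarrow> f \<in> verts n \<rightarrow>\<^sub>E verts m"
  by (induction rule: cmor.induct)
    (auto simp: ins_coord_def del_coord_def conn_coord_def compose_def PiE_iff extensional_def)

lemma cmor_length: "cmor n m f \<Longrightarrow> length x = n \<Longrightarrow> length (f x) = m"
  using cmor_funcset by (fastforce simp: PiE_iff)

lemma cmor_undefined: "cmor n m f \<Longrightarrow> length x \<noteq> n \<Longrightarrow> f x = undefined"
  using cmor_funcset by (auto simp: PiE_iff extensional_def)

lemma cmor_short_mono: "cmor n m f \<Longrightarrow> short_mono n f"
proof (induction rule: cmor.induct)
  case (cmor_id n)
  then show ?case by (auto simp: short_mono_def list_all2_lengthD)
next
  case (cmor_comp n m f p g)
  then show ?case using cmor_funcset[of n m f] by (auto intro: short_mono_compose)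
qed (blast intro: short_mono_face short_mono_degen short_mono_conn)+

lemma cmor_mono: "cmor n m f \<Longrightarrow> length x = n \<Longrightarrow> list_all2 (\<le>) x y \<Longrightarrow> list_all2 (\<le>) (f x) (f y)"
  using cmor_short_mono short_monoD by blast

lemma cmor_alpha_le_omega: "cmor n m f \<Longrightarrow> list_all2 (\<le>) (f (alpha_v n)) (f (omega_v n))"
  by (simp add: cmor_mono alpha_v_le)

lemma cmor_count_omega_le: "cmor n m f \<Longrightarrow>
    count_list (f (omega_v n)) True \<le> count_list (f (alpha_v n)) True + n"
  using short_monoD[OF cmor_short_mono, of n m f "alpha_v n" "omega_v n"] by (simp add: alpha_v_le)

lemma cmor_eq_constk:
  assumes f: "cmor n m f" and eq: "f (alpha_v n) = f (omega_v n)"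
  shows "f = constk n (f (alpha_v n))"
proof
  fix x
  show "f x = constk n (f (alpha_v n)) x"
  proof (cases "length x = n")
    case True
    then have "list_all2 (\<le>) (f (alpha_v n)) (f x)" "list_all2 (\<le>) (f x) (f (alpha_v n))"
      using cmor_mono[OF f, of "alpha_v n" x] cmor_mono[OF f, of x "omega_v n"] eq
      by (simp_all add: alpha_v_le le_omega_v)
    then have "f x = f (alpha_v n)"
      by (intro list_all2_antisym[OF antisym]) 
    then show ?thesis using True by (simp add: constk_def)
  qed (simp add: cmor_undefined[OF f] constk_def)
qed

lemma constk_eq_iff [simp]: "constk k v = constk k w \<longleftrightarrow> v = w"
  by (metis constk_def length_replicate restrict_apply' verts_iff)

lemma constk_apply: "length x = k \<Longrightarrow> constk k v x = v"
  by (simp add: constk_def)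

lemma compose_constk_right: "compose (verts k) f (constk k v) = constk k (f v)"
  by (auto simp: compose_def constk_def)

lemma compose_constk_left: "cmor k n phi \<Longrightarrow> compose (verts k) (constk n v) phi = constk k v"
  by (auto simp: compose_def constk_def cmor_length)

lemma compose_cube_id_left: "cmor k n phi \<Longrightarrow> compose (verts k) (cube_id n) phi = phi"
  by (auto simp: compose_def cube_id_def cmor_length cmor_undefined)

lemma compose_cube_id_right: "cmor n m f \<Longrightarrow> compose (verts n) f (cube_id n) = f"
  by (auto simp: compose_def cube_id_def cmor_undefined)

lemma compose_to_point: "compose (verts k) (constk 0 v) (to_point k) = constk k v"
  by (auto simp: compose_def constk_def to_point_def)

lemma cmor_cube_id: "cmor n n (cube_id n)"
  unfolding cube_id_def by (rule cmor_id)

lemma cmor_to_point: "cmor n 0 (to_point n)"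
proof (induction n)
  case 0
  have "to_point 0 = cube_id 0" by (auto simp: to_point_def cube_id_def)
  then show ?case using cmor_cube_id by simp
next
  case (Suc n)
  have "compose (verts (Suc n)) (to_point n) (restrict (del_coord 1) (verts (Suc n))) = to_point (Suc n)"
    by (auto simp: compose_def to_point_def del_coord_def)
  then show ?case using cmor_comp[OF cmor_degen[of 1 n] Suc] by simp
qed

lemma cmor_vertex: "length v = m \<Longrightarrow> cmor 0 m (constk 0 v)"
proof (induction v arbitrary: m)
  case Nil
  have "constk 0 [] = cube_id 0" by (auto simp: constk_def cube_id_def)
  then show ?case using Nil cmor_cube_id by simp
next
  case (Cons e v)
  have "compose (verts 0) (restrict (ins_coord 1 e) (verts (length v))) (constk 0 v) = constk 0 (e # v)"
    by (auto simp: compose_def constk_def ins_coord_def)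
  then show ?case using Cons cmor_comp[OF Cons.IH cmor_face[of 1 "length v" e]] by auto
qed

lemma cmor_constk: "length v = m \<Longrightarrow> cmor n m (constk n v)"
  using cmor_comp[OF cmor_to_point cmor_vertex] by (simp add: compose_to_point)

section \<open>Necklace maps and the images of top cells\<close>

lemma nec_norm_Pair: "nec_norm ns k (i, phi) =
    (if Suc i < length ns \<and> phi = constk k (omega_v (ns ! i))
     then (Suc i, constk k (alpha_v (ns ! Suc i))) else (i, phi))"
  by (simp add: nec_norm_def)

lemma nec_cells_iff: "(i, phi) \<in> nec_cells ns k \<longleftrightarrow>
    i < length ns \<and> cmor k (ns ! i) phi \<and> \<not> (Suc i < length ns \<and> phi = constk k (omega_v (ns ! i)))"
  by (simp add: nec_cells_def)

lemma nec_norm_cell: "(i, phi) \<in> nec_cells ns k \<Longrightarrow> nec_norm ns k (i, phi) = (i, phi)"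
  by (auto simp: nec_norm_Pair nec_cells_iff)

lemma nec_norm_single [simp]: "nec_norm [m] k x = x"
  by (simp add: nec_norm_def)

lemma nec_norm_eq_same_bead: "nec_norm ms k (j, p) = nec_norm ms k (j, p') \<Longrightarrow> p = p'"
  by (auto simp: nec_norm_Pair split: if_splits)

lemma nec_norm_vertex_eq:
  "nec_norm ms 0 (j, constk 0 v) = nec_norm ms 0 (j', constk 0 v') \<Longrightarrow>
     j = j' \<and> v = v' \<or>
     j' = Suc j \<and> j' < length ms \<and> v = omega_v (ms ! j) \<and> v' = alpha_v (ms ! j') \<or>
     j = Suc j' \<and> j < length ms \<and> v' = omega_v (ms ! j') \<and> v = alpha_v (ms ! j)"
  by (auto simp: nec_norm_Pair split: if_splits)

lemma nec_norm_alpha: "0 < ns ! 0 \<Longrightarrow> nec_norm ns 0 (0, constk 0 (alpha_v (ns ! 0))) = nec_alpha ns"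
  by (auto simp: nec_norm_Pair nec_alpha_def dest: alpha_v_neq_omega_v)

lemma nec_norm_omega: "ns \<noteq> [] \<Longrightarrow>
    nec_norm ns 0 (length ns - 1, constk 0 (omega_v (last ns))) = nec_omega ns"
  by (simp add: nec_norm_Pair nec_omega_def)

lemma nec_norm_glue: "Suc i < length ns \<Longrightarrow> 0 < ns ! Suc i \<Longrightarrow>
    nec_norm ns 0 (i, constk 0 (omega_v (ns ! i))) = nec_norm ns 0 (Suc i, constk 0 (alpha_v (ns ! Suc i)))"
  by (auto simp: nec_norm_Pair dest: alpha_v_neq_omega_v)

lemma top_cell_in_nec_cells:
  assumes "i < length ns" "0 < ns ! i"
  shows "(i, cube_id (ns ! i)) \<in> nec_cells ns (ns ! i)"
proof -
  have "cube_id (ns ! i) (alpha_v (ns ! i)) \<noteq> constk (ns ! i) (omega_v (ns ! i)) (alpha_v (ns ! i))"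
    using alpha_v_neq_omega_v[OF assms(2)] by (simp add: cube_id_def constk_apply)
  then show ?thesis using assms cmor_cube_id by (auto simp: nec_cells_iff)
qed

lemma cells_necklace [simp]: "cells (necklace ns) = nec_cells ns"
  and act_necklace [simp]: "act (necklace ns) k' k psi x = nec_norm ns k' (fst x, compose (verts k') (snd x) psi)"
  by (simp_all add: necklace_def)

lemma nec_mor_cells: "nec_mor ns ms F \<Longrightarrow> x \<in> nec_cells ns k \<Longrightarrow> F k x \<in> nec_cells ms k"
  unfolding nec_mor_def dp_hom_def cs_hom_def by (simp only: cells_necklace)

lemma nec_mor_act: "nec_mor ns ms F \<Longrightarrow> cmor k' k psi \<Longrightarrow> x \<in> nec_cells ns k \<Longrightarrow>
    F k' (nec_norm ns k' (fst x, compose (verts k') (snd x) psi)) =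
    nec_norm ms k' (fst (F k x), compose (verts k') (snd (F k x)) psi)"
  unfolding nec_mor_def dp_hom_def cs_hom_def by simp

lemma nec_mor_alpha: "nec_mor ns ms F \<Longrightarrow> F 0 (nec_alpha ns) = nec_alpha ms"
  and nec_mor_omega: "nec_mor ns ms F \<Longrightarrow> F 0 (nec_omega ns) = nec_omega ms"
  by (simp_all add: nec_mor_def dp_hom_def)

definition top_bead :: "nat list \<Rightarrow> (nat \<Rightarrow> nat \<times> cube \<Rightarrow> nat \<times> cube) \<Rightarrow> nat \<Rightarrow> nat" where
  "top_bead ns F i = fst (F (ns ! i) (i, cube_id (ns ! i)))"

definition top_map :: "nat list \<Rightarrow> (nat \<Rightarrow> nat \<times> cube \<Rightarrow> nat \<times> cube) \<Rightarrow> nat \<Rightarrow> cube" where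
  "top_map ns F i = snd (F (ns ! i) (i, cube_id (ns ! i)))"

lemma top_image: "F (ns ! i) (i, cube_id (ns ! i)) = (top_bead ns F i, top_map ns F i)"
  by (simp add: top_bead_def top_map_def)

lemma top_image_in_nec_cells:
  "nec_mor ns ms F \<Longrightarrow> i < length ns \<Longrightarrow> 0 < ns ! i \<Longrightarrow>
    (top_bead ns F i, top_map ns F i) \<in> nec_cells ms (ns ! i)"
  by (metis top_image nec_mor_cells top_cell_in_nec_cells)

lemma top_bead_less: "nec_mor ns ms F \<Longrightarrow> i < length ns \<Longrightarrow> 0 < ns ! i \<Longrightarrow> top_bead ns F i < length ms"
  and cmor_top_map: "nec_mor ns ms F \<Longrightarrow> i < length ns \<Longrightarrow> 0 < ns ! i \<Longrightarrow>
    cmor (ns ! i) (ms ! top_bead ns F i) (top_map ns F i)"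
  using top_image_in_nec_cells[of ns ms F i] by (simp_all add: nec_cells_iff)

text \<open>Yoneda: the top cell \<open>(i, id)\<close> generates bead \<open>i\<close>.\<close>
lemma nec_mor_apply:
  assumes F: "nec_mor ns ms F" and x: "(i, phi) \<in> nec_cells ns k" and pos: "0 < ns ! i"
  shows "F k (i, phi) = nec_norm ms k (top_bead ns F i, compose (verts k) (top_map ns F i) phi)"
proof -
  have i: "i < length ns" and phi: "cmor k (ns ! i) phi" using x by (simp_all add: nec_cells_iff)
  have "F k (nec_norm ns k (i, phi)) =
      nec_norm ms k (top_bead ns F i, compose (verts k) (top_map ns F i) phi)"
    using nec_mor_act[OF F phi top_cell_in_nec_cells[OF i pos]]
    by (simp add: compose_cube_id_left[OF phi] top_image)
  then show ?thesis using nec_norm_cell[OF x] by simp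
qed

lemma nec_mor_apply_vertex:
  assumes F: "nec_mor ns ms F" and i: "i < length ns" "0 < ns ! i" and v: "length v = ns ! i"
  shows "F 0 (nec_norm ns 0 (i, constk 0 v)) = nec_norm ms 0 (top_bead ns F i, constk 0 (top_map ns F i v))"
  using nec_mor_act[OF F cmor_vertex[OF v] top_cell_in_nec_cells[OF i]]
  by (simp add: compose_cube_id_left[OF cmor_vertex[OF v]] compose_constk_right top_image)
    (simp add: cube_id_def v)

section \<open>Maps into a single cube\<close>

definition cube_chain :: "nat list \<Rightarrow> nat \<Rightarrow> cube list \<Rightarrow> bool" where
  "cube_chain ns m phis \<longleftrightarrow> length phis = length ns \<and>
     (\<forall>i < length ns. cmor (ns ! i) m (phis ! i)) \<and>
     (phis ! 0) (alpha_v (ns ! 0)) = alpha_v m \<and>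
     (\<forall>i. Suc i < length ns \<longrightarrow> (phis ! i) (omega_v (ns ! i)) = (phis ! Suc i) (alpha_v (ns ! Suc i))) \<and>
     (phis ! (length ns - 1)) (omega_v (last ns)) = omega_v m"

lemma star_maps_nec_mor:
  assumes ne: "ns \<noteq> []" and chain: "cube_chain ns m phis"
  shows "nec_mor ns [m] (star_maps phis)"
  unfolding nec_mor_def dp_hom_def cs_hom_def cells_necklace act_necklace
proof (intro conjI allI impI)
  fix k x assume "x \<in> nec_cells ns k"
  then show "star_maps phis k x \<in> nec_cells [m] k"
    using chain by (cases x) (auto simp: nec_cells_iff star_maps_def cube_chain_def intro: cmor_comp)
next
  fix k k' psi x assume psi: "cmor k' k psi" and x: "x \<in> nec_cells ns k"
  obtain i phi where x_eq: "x = (i, phi)" by (cases x)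
  have assoc: "compose (verts k') (compose (verts k) (phis ! i) phi) psi =
      compose (verts k') (phis ! i) (compose (verts k') phi psi)"
    using psi cmor_funcset by (intro compose_assoc[symmetric]) (auto simp: PiE_iff)
  show "star_maps phis k' (nec_norm ns k' (fst x, compose (verts k') (snd x) psi)) =
      nec_norm [m] k' (fst (star_maps phis k x), compose (verts k') (snd (star_maps phis k x)) psi)"
    using chain assoc by (auto simp: x_eq nec_norm_Pair star_maps_def compose_constk_right cube_chain_def)
next
  show "star_maps phis 0 (nec_alpha ns) = nec_alpha [m]"
    using chain by (simp add: star_maps_def nec_alpha_def compose_constk_right cube_chain_def)
  show "star_maps phis 0 (nec_omega ns) = nec_omega [m]"
    using chain by (simp add: star_maps_def nec_omega_def compose_constk_right cube_chain_def)
qed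

text \<open>Along the chain the number of true coordinates grows by at most \<open>n\<^sub>i\<close> across the
  \<open>i\<close>-th cube, from \<open>0\<close> at \<open>\<alpha>\<close> to \<open>m\<close> at \<open>\<omega>\<close>.\<close>
lemma cube_chain_dim_le:
  assumes ne: "ns \<noteq> []" and chain: "cube_chain ns m phis"
  shows "m \<le> sum_list ns"
proof -
  have "count_list ((phis ! t) (omega_v (ns ! t))) True \<le> sum_list (take (Suc t) ns)"
    if "t < length ns" for t
    using that
  proof (induction t)
    case 0
    then show ?case
      using chain cmor_count_omega_le[of "ns ! 0" m "phis ! 0"] ne
      by (cases ns) (auto simp: cube_chain_def)
  next
    case (Suc t)
    have "cmor (ns ! Suc t) m (phis ! Suc t)"
      using chain Suc.prems by (simp add: cube_chain_def)
    then have "count_list ((phis ! Suc t) (omega_v (ns ! Suc t))) True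
        \<le> count_list ((phis ! Suc t) (alpha_v (ns ! Suc t))) True + ns ! Suc t"
      by (rule cmor_count_omega_le)
    also have "\<dots> = count_list ((phis ! t) (omega_v (ns ! t))) True + ns ! Suc t"
      using chain Suc.prems by (simp add: cube_chain_def)
    also have "\<dots> \<le> sum_list (take (Suc (Suc t)) ns)"
      using Suc by (simp add: take_Suc_conv_app_nth)
    finally show ?case .
  qed
  from this[of "length ns - 1"] show ?thesis
    using chain ne by (simp add: cube_chain_def last_conv_nth)
qed

context
  fixes ns m F
  assumes ne: "ns \<noteq> []" and pos: "\<forall>n \<in> set ns. 0 < n" and F: "nec_mor ns [m] F"
begin

private lemma pos_nth: "i < length ns \<Longrightarrow> 0 < ns ! i"
  using pos by simp

lemma nec_mor_to_cube_top_bead: "i < length ns \<Longrightarrow> top_bead ns F i = 0"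
  using top_bead_less[OF F _ pos_nth] by simp

lemma nec_mor_to_cube_chain: "cube_chain ns m (map (top_map ns F) [0..<length ns])"
proof -
  let ?phis = "map (top_map ns F) [0..<length ns]"
  have "0 < length ns" using ne by simp
  have cm: "\<forall>i < length ns. cmor (ns ! i) m (?phis ! i)"
    using cmor_top_map[OF F _ pos_nth] nec_mor_to_cube_top_bead by simp
  have first: "(?phis ! 0) (alpha_v (ns ! 0)) = alpha_v m"
    using nec_mor_apply_vertex[OF F _ pos_nth, of 0 "alpha_v (ns ! 0)"] nec_mor_alpha[OF F]
      nec_norm_alpha[OF pos_nth] nec_mor_to_cube_top_bead \<open>0 < length ns\<close>
    by (simp add: nec_alpha_def)
  have last: "(?phis ! (length ns - 1)) (omega_v (last ns)) = omega_v m"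
    using nec_mor_apply_vertex[OF F _ pos_nth, of "length ns - 1" "omega_v (last ns)"]
      nec_mor_omega[OF F] nec_norm_omega[OF ne] nec_mor_to_cube_top_bead ne
    by (simp add: nec_omega_def last_conv_nth)
  have glue: "(?phis ! i) (omega_v (ns ! i)) = (?phis ! Suc i) (alpha_v (ns ! Suc i))"
    if i: "Suc i < length ns" for i
    using nec_mor_apply_vertex[OF F _ pos_nth, of i "omega_v (ns ! i)"]
      nec_mor_apply_vertex[OF F _ pos_nth, of "Suc i" "alpha_v (ns ! Suc i)"]
      nec_norm_glue[OF i pos_nth[OF i]] nec_mor_to_cube_top_bead i
    by simp
  show ?thesis
    unfolding cube_chain_def using cm first glue last by simp
qed

lemma nec_mor_to_cube_agree: "nec_agree ns F (star_maps (map (top_map ns F) [0..<length ns]))"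
  unfolding nec_agree_def
proof (intro allI ballI)
  fix k x assume x: "x \<in> nec_cells ns k"
  obtain i phi where x_eq: "x = (i, phi)" by (cases x)
  then have "i < length ns" using x by (simp add: nec_cells_iff)
  then show "F k x = star_maps (map (top_map ns F) [0..<length ns]) k x"
    using nec_mor_apply[OF F x[unfolded x_eq] pos_nth] nec_mor_to_cube_top_bead
    by (simp add: x_eq star_maps_def)
qed

lemma nec_mor_to_cube_unique:
  assumes len: "length psis = length ns" and cm: "\<forall>i < length ns. cmor (ns ! i) m (psis ! i)"
    and agree: "nec_agree ns F (star_maps psis)"
  shows "psis = map (top_map ns F) [0..<length ns]"
proof (rule nth_equalityI)
  fix i assume "i < length psis"
  then have i: "i < length ns" using len by simp
  have "F (ns ! i) (i, cube_id (ns ! i)) = star_maps psis (ns ! i) (i, cube_id (ns ! i))"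
    using agree top_cell_in_nec_cells[OF i pos_nth[OF i]] by (simp add: nec_agree_def)
  then have "top_map ns F i = compose (verts (ns ! i)) (psis ! i) (cube_id (ns ! i))"
    by (simp add: top_map_def star_maps_def)
  then show "psis ! i = map (top_map ns F) [0..<length ns] ! i"
    using compose_cube_id_right[of "ns ! i" m "psis ! i"] cm i by simp
qed (use len in simp)

lemma nec_mor_to_cube_ex1: "\<exists>!phis. cube_chain ns m phis \<and> nec_agree ns F (star_maps phis)"
proof (rule ex1I[of _ "map (top_map ns F) [0..<length ns]"])
  show "cube_chain ns m (map (top_map ns F) [0..<length ns]) \<and>
      nec_agree ns F (star_maps (map (top_map ns F) [0..<length ns]))"
    using nec_mor_to_cube_chain nec_mor_to_cube_agree by simp
  fix psis assume "cube_chain ns m psis \<and> nec_agree ns F (star_maps psis)"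
  then show "psis = map (top_map ns F) [0..<length ns]"
    by (intro nec_mor_to_cube_unique) (simp_all add: cube_chain_def)
qed

end

section \<open>Decompositions into blocks\<close>

lemma blk_off_conv_length_concat: "blk_off As j = length (concat (take j As))"
  by (simp add: blk_off_def length_concat)

lemma blk_off_0 [simp]: "blk_off As 0 = 0"
  by (simp add: blk_off_def)

lemma blk_off_Suc: "j < length As \<Longrightarrow> blk_off As (Suc j) = blk_off As j + length (As ! j)"
  by (simp add: blk_off_def take_Suc_conv_app_nth)

lemma blk_off_mono: "j \<le> j' \<Longrightarrow> blk_off As j \<le> blk_off As j'"
  by (auto simp: blk_off_def le_iff_add take_add)

lemma blk_off_le_length: "blk_off As j \<le> length (concat As)"
  by (metis blk_off_conv_length_concat append_take_drop_id concat_append le_add1 length_append)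

lemma blk_off_length [simp]: "blk_off As (length As) = length (concat As)"
  by (simp add: blk_off_conv_length_concat)

lemma blk_off_append: "j \<le> length As \<Longrightarrow> blk_off (As @ Bs) j = blk_off As j"
  by (simp add: blk_off_def)

lemma concat_split_at_block:
  "j < length As \<Longrightarrow> concat As = concat (take j As) @ As ! j @ concat (drop (Suc j) As)"
  by (metis append_take_drop_id concat.simps(2) concat_append Cons_nth_drop_Suc)

lemma nth_concat_blk_off:
  "j < length As \<Longrightarrow> i' < length (As ! j) \<Longrightarrow> concat As ! (blk_off As j + i') = As ! j ! i'"
  by (subst concat_split_at_block[of j]) (simp_all add: blk_off_conv_length_concat nth_append_left del: length_concat)

lemma nth_conv_blk_off:
  "j < length As \<Longrightarrow> As ! j = drop (blk_off As j) (take (blk_off As (Suc j)) (concat As))"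
  by (simp only: blk_off_Suc, subst concat_split_at_block[of j])
    (simp_all add: blk_off_conv_length_concat del: length_concat)

lemma blk_of_eqI: "blk_off As j \<le> i \<Longrightarrow> i < blk_off As (Suc j) \<Longrightarrow> blk_of As i = j"
  unfolding blk_of_def
  by (rule Least_equality) (meson blk_off_mono leD le_trans not_less_eq_eq)+

lemma blk_of_bounds:
  assumes "i < length (concat As)"
  shows "blk_of As i < length As" "blk_off As (blk_of As i) \<le> i" "i < blk_off As (Suc (blk_of As i))"
proof -
  have len: "0 < length As" using assms by (cases As) auto
  then have ex: "i < blk_off As (Suc (length As - 1))" using assms by simp
  show "i < blk_off As (Suc (blk_of As i))"
    unfolding blk_of_def by (rule LeastI[of "\<lambda>j. i < blk_off As (Suc j)", OF ex])
  have "blk_of As i \<le> length As - 1"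
    unfolding blk_of_def by (rule Least_le[of "\<lambda>j. i < blk_off As (Suc j)", OF ex])
  then show "blk_of As i < length As" using len by linarith
  show "blk_off As (blk_of As i) \<le> i"
  proof (cases "blk_of As i")
    case (Suc p)
    then have "\<not> i < blk_off As (Suc p)"
      using not_less_Least[of p "\<lambda>j. i < blk_off As (Suc j)"] by (simp add: blk_of_def)
    then show ?thesis using Suc by simp
  qed simp
qed

lemma blk_of_blk_off_add:
  "j < length As \<Longrightarrow> i' < length (As ! j) \<Longrightarrow> blk_of As (blk_off As j + i') = j"
  by (rule blk_of_eqI) (simp_all add: blk_off_Suc)

lemma blk_off_add_less_length:
  "j < length As \<Longrightarrow> i' < length (As ! j) \<Longrightarrow> blk_off As j + i' < length (concat As)"
  using blk_off_le_length[of As "Suc j"] by (simp add: blk_off_Suc)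

lemma nth_concat_blk_of:
  assumes "i < length (concat As)"
  shows "i - blk_off As (blk_of As i) < length (As ! blk_of As i)"
    "As ! blk_of As i ! (i - blk_off As (blk_of As i)) = concat As ! i"
  using blk_of_bounds[OF assms] nth_concat_blk_off[of "blk_of As i" As "i - blk_off As (blk_of As i)"]
  by (simp_all add: blk_off_Suc)

lemma blk_of_less_iff: "i < length (concat As) \<Longrightarrow> blk_of As i < j \<longleftrightarrow> i < blk_off As j"
  using blk_of_bounds[of i As] blk_off_mono[of _ _ As]
  by (meson Suc_leI leD le_less_trans not_le_imp_less)

lemma blk_of_snoc:
  assumes "i < length (concat As) + length B"
  shows "blk_of (As @ [B]) i = (if i < length (concat As) then blk_of As i else length As)"
proof (cases "i < length (concat As)")
  case True
  then show ?thesis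
    using blk_of_bounds[OF True] blk_off_append[of _ As "[B]"]
    by (intro blk_of_eqI) (simp_all add: Suc_leI)
next
  case False
  then show ?thesis
    using assms blk_off_append[of "length As" As "[B]"] blk_off_length[of "As @ [B]"]
    by (intro blk_of_eqI) simp_all
qed

lemma blocks_eqI:
  assumes "concat As = concat As'" "length As = length As'"
    and "\<forall>i < length (concat As). blk_of As i = blk_of As' i"
  shows "As = As'"
proof -
  have "\<not> blk_off Xs j < blk_off Ys j"
    if "concat Xs = concat Ys" "\<forall>i < length (concat Xs). blk_of Xs i = blk_of Ys i" for Xs Ys j
  proof
    assume lt: "blk_off Xs j < blk_off Ys j"
    then have "blk_off Xs j < length (concat Xs)"
      using blk_off_le_length[of Ys j] that(1) by simp
    then show False
      using lt that blk_of_less_iff[of "blk_off Xs j" Xs j] blk_of_less_iff[of "blk_off Xs j" Ys j] by simp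
  qed
  then have "blk_off As j = blk_off As' j" for j
    using assms by (metis linorder_neqE_nat)
  then show ?thesis
    using assms(1,2) by (metis nth_equalityI nth_conv_blk_off)
qed

lemma decomp_snoc:
  assumes dec: "is_decomp ns l As" and "ns \<noteq> []" and c: "c = l - 1 \<or> c = l"
  shows "\<exists>As'. is_decomp (ns @ [x]) (Suc c) As' \<and>
    (\<forall>i < length ns. blk_of As' i = blk_of As i) \<and> blk_of As' (length ns) = c"
proof -
  have As: "concat As = ns" "length As = l" "\<forall>A \<in> set As. A \<noteq> []"
    using dec by (simp_all add: is_decomp_def)
  show ?thesis
  proof (cases "c = l")
    case True
    then show ?thesis
      using As blk_of_snoc[of _ As "[x]"]
      by (intro exI[of _ "As @ [[x]]"]) (simp add: is_decomp_def)
  next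
    case False
    have "As \<noteq> []" using As \<open>ns \<noteq> []\<close> by auto
    then obtain As0 B where As_eq: "As = As0 @ [B]"
      using rev_exhaust by blast
    have "length ns = length (concat As0) + length B"
      using As(1) by (simp add: As_eq flip: length_append)
    then show ?thesis
      using As False c blk_of_snoc[of _ As0 B] blk_of_snoc[of _ As0 "B @ [x]"]
      by (intro exI[of _ "As0 @ [B @ [x]]"]) (auto simp: As_eq is_decomp_def)
  qed
qed

lemma decomp_of_steps:
  assumes "ns \<noteq> []" and "b 0 = 0"
    and "\<forall>i. Suc i < length ns \<longrightarrow> b (Suc i) = b i \<or> b (Suc i) = Suc (b i)"
  shows "\<exists>As. is_decomp ns (Suc (b (length ns - 1))) As \<and> (\<forall>i < length ns. blk_of As i = b i)"
  using assms
proof (induction ns rule: rev_induct)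
  case (snoc x ns)
  show ?case
  proof (cases "ns = []")
    case True
    have "blk_of [[x]] 0 = 0" by (rule blk_of_eqI) (simp_all add: blk_off_def)
    then show ?thesis using True snoc.prems by (intro exI[of _ "[[x]]"]) (simp add: is_decomp_def)
  next
    case False
    then obtain As where dec: "is_decomp ns (Suc (b (length ns - 1))) As"
      and blk: "\<forall>i < length ns. blk_of As i = b i"
      using snoc by auto
    have "Suc (length ns - 1) = length ns" using False by simp
    then have "b (length ns) = b (length ns - 1) \<or> b (length ns) = Suc (b (length ns - 1))"
      using snoc.prems(3) by (metis length_append_singleton lessI)
    then obtain As' where "is_decomp (ns @ [x]) (Suc (b (length ns))) As'"
      "\<forall>i < length ns. blk_of As' i = blk_of As i" "blk_of As' (length ns) = b (length ns)"
      using decomp_snoc[OF dec False, of "b (length ns)" x] by auto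
    then show ?thesis
      using blk by (intro exI[of _ As']) (auto simp: less_Suc_eq)
  qed
qed simp

section \<open>Wedge decompositions\<close>

lemma bead_restr_const_if_top_map_constk:
  assumes F: "nec_mor ns ms F" and i: "i < length ns" "0 < ns ! i"
    and const: "top_map ns F i = constk (ns ! i) w"
  shows "bead_restr_const ns ms F i"
proof -
  define j where "j = top_bead ns F i"
  have "(j, constk (ns ! i) w) \<in> nec_cells ms (ns ! i)"
    using top_image_in_nec_cells[OF F i] const by (simp add: j_def)
  then have j: "j < length ms" "cmor (ns ! i) (ms ! j) (constk (ns ! i) w)"
    and not_omega: "\<not> (Suc j < length ms \<and> w = omega_v (ms ! j))"
    by (simp_all add: nec_cells_iff)
  have "length w = ms ! j"
    using cmor_length[OF j(2), of "alpha_v (ns ! i)"] by (simp add: constk_apply)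
  then have vertex: "(j, constk 0 w) \<in> nec_cells ms 0"
    using j not_omega cmor_vertex[of w] by (simp add: nec_cells_iff)
  show ?thesis
    unfolding bead_restr_const_def
  proof (intro bexI[OF _ vertex] allI impI)
    fix k psi assume psi: "cmor k (ns ! i) psi"
    have "F k (nec_norm ns k (i, psi)) = nec_norm ms k (j, constk k w)"
      using nec_mor_act[OF F psi top_cell_in_nec_cells[OF i]] const
      by (simp add: top_image compose_cube_id_left[OF psi] compose_constk_left[OF psi] j_def)
    then show "F k (bead ns i k psi) = act (necklace ms) k 0 (to_point k) (j, constk 0 w)"
      by (simp add: bead_def compose_to_point)
  qed
qed

lemma wedge_decomp_top_image:
  assumes W: "wedge_decomp ns ms F As fs" and i: "i < length ns" "0 < ns ! i"
  shows "F (ns ! i) (i, cube_id (ns ! i)) = nec_norm ms (ns ! i)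
    (blk_of As i, top_map (As ! blk_of As i) (fs ! blk_of As i) (i - blk_off As (blk_of As i)))"
proof -
  have "concat As = ns" "nec_agree ns F (wedge_maps As ms fs)"
    using W by (simp_all add: wedge_decomp_def is_decomp_def)
  moreover have "As ! blk_of As i ! (i - blk_off As (blk_of As i)) = ns ! i"
    using nth_concat_blk_of(2)[of i As] i calculation(1) by simp
  ultimately show ?thesis
    using top_cell_in_nec_cells[OF i]
    by (simp add: nec_agree_def wedge_maps_def bead_def top_map_def Let_def)
qed

text \<open>A bead mapped constantly onto the vertex \<open>\<alpha>\<close> of a target bead \<open>j > 0\<close>, which is
  glued to \<open>\<omega>\<close> of bead \<open>j - 1\<close>, is reassigned to bead \<open>j - 1\<close> as the constant map
  at \<open>\<omega>\<close>; then the target bead grows in steps of \<open>0\<close> or \<open>1\<close> (\<open>block_step\<close>).\<close>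
definition block_idx :: "nat list \<Rightarrow> nat list \<Rightarrow> (nat \<Rightarrow> nat \<times> cube \<Rightarrow> nat \<times> cube) \<Rightarrow> nat \<Rightarrow> nat" where
  "block_idx ns ms F i =
     (if 0 < top_bead ns F i \<and> top_map ns F i (omega_v (ns ! i)) = alpha_v (ms ! top_bead ns F i)
      then top_bead ns F i - 1 else top_bead ns F i)"

definition block_map :: "nat list \<Rightarrow> nat list \<Rightarrow> (nat \<Rightarrow> nat \<times> cube \<Rightarrow> nat \<times> cube) \<Rightarrow> nat \<Rightarrow> cube" where
  "block_map ns ms F i =
     (if block_idx ns ms F i = top_bead ns F i then top_map ns F i
      else constk (ns ! i) (omega_v (ms ! block_idx ns ms F i)))"

lemma block_map_apply: "length v = ns ! i \<Longrightarrow> block_map ns ms F i v =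
    (if block_idx ns ms F i = top_bead ns F i then top_map ns F i v else omega_v (ms ! block_idx ns ms F i))"
  by (simp add: block_map_def constk_apply)

definition block_maps :: "nat list \<Rightarrow> nat list \<Rightarrow> (nat \<Rightarrow> nat \<times> cube \<Rightarrow> nat \<times> cube) \<Rightarrow> nat list list
    \<Rightarrow> nat \<Rightarrow> cube list" where
  "block_maps ns ms F As j = map (\<lambda>i'. block_map ns ms F (blk_off As j + i')) [0..<length (As ! j)]"

context
  fixes ns ms :: "nat list" and F :: "nat \<Rightarrow> nat \<times> cube \<Rightarrow> nat \<times> cube"
  assumes ns_ne: "ns \<noteq> []" and ms_ne: "ms \<noteq> []"
    and ns_pos: "\<forall>n \<in> set ns. 0 < n" and ms_pos: "\<forall>m \<in> set ms. 0 < m"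
    and F: "nec_mor ns ms F"
begin

private lemma ns_pos_nth: "i < length ns \<Longrightarrow> 0 < ns ! i"
  using ns_pos by simp

private lemma ms_pos_nth: "j < length ms \<Longrightarrow> 0 < ms ! j"
  using ms_pos by simp

private lemma top_cell_image:
  "i < length ns \<Longrightarrow> (top_bead ns F i, top_map ns F i) \<in> nec_cells ms (ns ! i)"
  using top_image_in_nec_cells[OF F _ ns_pos_nth] .

lemma top_map_first: "top_bead ns F 0 = 0 \<and> top_map ns F 0 (alpha_v (ns ! 0)) = alpha_v (ms ! 0)"
proof -
  have "0 < length ns" using ns_ne by simp
  then have "nec_norm ms 0 (top_bead ns F 0, constk 0 (top_map ns F 0 (alpha_v (ns ! 0)))) = nec_alpha ms"
    using nec_mor_apply_vertex[OF F _ ns_pos_nth, of 0 "alpha_v (ns ! 0)"] nec_mor_alpha[OF F]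
      nec_norm_alpha[OF ns_pos_nth]
    by simp
  then show ?thesis by (auto simp: nec_norm_Pair nec_alpha_def split: if_splits)
qed

lemma top_map_last: "top_bead ns F (length ns - 1) = length ms - 1 \<and>
    top_map ns F (length ns - 1) (omega_v (ns ! (length ns - 1))) = omega_v (ms ! (length ms - 1))"
proof -
  have "length ns - 1 < length ns" "0 < ms ! (length ms - 1)" using ns_ne ms_ne ms_pos_nth by simp_all
  then have "nec_norm ms 0 (top_bead ns F (length ns - 1),
      constk 0 (top_map ns F (length ns - 1) (omega_v (ns ! (length ns - 1))))) = nec_omega ms"
    using nec_mor_apply_vertex[OF F _ ns_pos_nth, of "length ns - 1" "omega_v (ns ! (length ns - 1))"]
      nec_mor_omega[OF F] nec_norm_omega[OF ns_ne] ns_ne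
    by (simp add: last_conv_nth)
  then show ?thesis using \<open>0 < ms ! (length ms - 1)\<close>
    by (auto simp: nec_norm_Pair nec_omega_def last_conv_nth[OF ms_ne] split: if_splits
        dest: alpha_v_neq_omega_v)
qed

lemma top_map_glue: "Suc i < length ns \<Longrightarrow>
    nec_norm ms 0 (top_bead ns F i, constk 0 (top_map ns F i (omega_v (ns ! i)))) =
    nec_norm ms 0 (top_bead ns F (Suc i), constk 0 (top_map ns F (Suc i) (alpha_v (ns ! Suc i))))"
  using nec_mor_apply_vertex[OF F _ ns_pos_nth, of i "omega_v (ns ! i)"]
    nec_mor_apply_vertex[OF F _ ns_pos_nth, of "Suc i" "alpha_v (ns ! Suc i)"]
    nec_norm_glue[OF _ ns_pos_nth, of i]
  by simp

lemma top_map_eq_constk_alpha: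
  assumes i: "i < length ns" and "top_map ns F i (omega_v (ns ! i)) = alpha_v (ms ! top_bead ns F i)"
  shows "top_map ns F i = constk (ns ! i) (alpha_v (ms ! top_bead ns F i))"
proof -
  have cm: "cmor (ns ! i) (ms ! top_bead ns F i) (top_map ns F i)"
    using top_cell_image[OF i] by (simp add: nec_cells_iff)
  then have "top_map ns F i (alpha_v (ns ! i)) = alpha_v (ms ! top_bead ns F i)"
    using cmor_alpha_le_omega[OF cm] assms(2) le_alpha_v_iff by simp
  then show ?thesis using cmor_eq_constk[OF cm] assms(2) by simp
qed

lemma cmor_block_map: "i < length ns \<Longrightarrow> cmor (ns ! i) (ms ! block_idx ns ms F i) (block_map ns ms F i)"
  using top_cell_image[of i] by (auto simp: block_map_def nec_cells_iff intro: cmor_constk)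

lemma top_map_alpha_neq_omega:
  assumes i: "i < length ns" and "Suc (top_bead ns F i) < length ms"
  shows "top_map ns F i (alpha_v (ns ! i)) \<noteq> omega_v (ms ! top_bead ns F i)"
proof
  assume alpha: "top_map ns F i (alpha_v (ns ! i)) = omega_v (ms ! top_bead ns F i)"
  have cm: "cmor (ns ! i) (ms ! top_bead ns F i) (top_map ns F i)"
    using top_cell_image[OF i] by (simp add: nec_cells_iff)
  then have "top_map ns F i (omega_v (ns ! i)) = omega_v (ms ! top_bead ns F i)"
    using cmor_alpha_le_omega[OF cm] alpha omega_v_le_iff by simp
  then have "top_map ns F i = constk (ns ! i) (omega_v (ms ! top_bead ns F i))"
    using cmor_eq_constk[OF cm] alpha by simp
  then show False using top_cell_image[OF i] assms(2) by (simp add: nec_cells_iff)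
qed

lemma block_first: "block_idx ns ms F 0 = 0 \<and> block_map ns ms F 0 (alpha_v (ns ! 0)) = alpha_v (ms ! 0)"
  using top_map_first block_map_apply[of "alpha_v (ns ! 0)" ns 0] by (simp add: block_idx_def)

lemma block_last: "block_idx ns ms F (length ns - 1) = length ms - 1 \<and>
    block_map ns ms F (length ns - 1) (omega_v (ns ! (length ns - 1))) = omega_v (ms ! (length ms - 1))"
proof -
  have "0 < ms ! (length ms - 1)" using ms_ne ms_pos_nth by simp
  then have "alpha_v (ms ! (length ms - 1)) \<noteq> omega_v (ms ! (length ms - 1))"
    by (rule alpha_v_neq_omega_v)
  then have "block_idx ns ms F (length ns - 1) = length ms - 1"
    using top_map_last by (auto simp: block_idx_def)
  then show ?thesis
    using top_map_last block_map_apply[of "omega_v (ns ! (length ns - 1))" ns "length ns - 1"] by simp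
qed

lemma block_step:
  assumes i: "Suc i < length ns"
  shows "block_idx ns ms F (Suc i) = block_idx ns ms F i \<and>
      block_map ns ms F i (omega_v (ns ! i)) = block_map ns ms F (Suc i) (alpha_v (ns ! Suc i))
    \<or> block_idx ns ms F (Suc i) = Suc (block_idx ns ms F i) \<and>
      block_map ns ms F i (omega_v (ns ! i)) = omega_v (ms ! block_idx ns ms F i) \<and>
      block_map ns ms F (Suc i) (alpha_v (ns ! Suc i)) = alpha_v (ms ! block_idx ns ms F (Suc i))"
proof -
  define j where "j = top_bead ns F i"
  define z where "z = top_map ns F i (omega_v (ns ! i))"
  define j' where "j' = top_bead ns F (Suc i)"
  define a' where "a' = top_map ns F (Suc i) (alpha_v (ns ! Suc i))"
  define z' where "z' = top_map ns F (Suc i) (omega_v (ns ! Suc i))"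
  have "cmor (ns ! Suc i) (ms ! j') (top_map ns F (Suc i))"
    using top_cell_image[OF i] by (simp add: nec_cells_iff j'_def)
  from cmor_alpha_le_omega[OF this] have a'_le_z': "list_all2 (\<le>) a' z'"
    unfolding a'_def z'_def .
  have j: "j < length ms" "j' < length ms"
    using top_cell_image[OF i] top_cell_image[of i] i by (simp_all add: nec_cells_iff j_def j'_def)
  note defs = block_idx_def block_map_apply j_def[symmetric] z_def[symmetric] j'_def[symmetric]
    a'_def[symmetric] z'_def[symmetric]
  from nec_norm_vertex_eq[OF top_map_glue[OF i, folded j_def z_def j'_def a'_def]] show ?thesis
  proof (elim disjE conjE)
    assume "j = j'" "z = a'"
    moreover have "a' = alpha_v (ms ! j)" if "z' = alpha_v (ms ! j)"
      using a'_le_z' that le_alpha_v_iff by simp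
    ultimately show ?thesis by (auto simp: defs)
  next
    assume "j' = Suc j" "j' < length ms" "z = omega_v (ms ! j)" "a' = alpha_v (ms ! j')"
    moreover have "omega_v (ms ! j) \<noteq> alpha_v (ms ! j)"
      using alpha_v_neq_omega_v[OF ms_pos_nth[OF j(1)]] by simp
    ultimately show ?thesis by (auto simp: defs)
  next
    assume "j = Suc j'" "j < length ms" "a' = omega_v (ms ! j')" "z = alpha_v (ms ! j)"
    then show ?thesis using top_map_alpha_neq_omega[OF i] by (simp add: a'_def j'_def)
  qed
qed

lemma nec_mor_apply_block:
  assumes x: "(i, phi) \<in> nec_cells ns k"
  shows "F k (i, phi) = nec_norm ms k (block_idx ns ms F i, compose (verts k) (block_map ns ms F i) phi)"
proof -
  have i: "i < length ns" and phi: "cmor k (ns ! i) phi" using x by (simp_all add: nec_cells_iff)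
  define j where "j = top_bead ns F i"
  have top: "F k (i, phi) = nec_norm ms k (j, compose (verts k) (top_map ns F i) phi)"
    using nec_mor_apply[OF F x ns_pos_nth[OF i]] by (simp add: j_def)
  show ?thesis
  proof (cases "block_idx ns ms F i = j")
    case True
    then show ?thesis using top by (simp add: block_map_def j_def)
  next
    case False
    then have j0: "0 < j" "top_map ns F i (omega_v (ns ! i)) = alpha_v (ms ! j)" "block_idx ns ms F i = j - 1"
      by (auto simp: block_idx_def j_def split: if_splits)
    have "j < length ms" using top_cell_image[OF i] by (simp add: nec_cells_iff j_def)
    moreover have "alpha_v (ms ! j) \<noteq> omega_v (ms ! j)"
      using alpha_v_neq_omega_v[OF ms_pos_nth[OF calculation]] .
    moreover have "top_map ns F i = constk (ns ! i) (alpha_v (ms ! j))"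
      using top_map_eq_constk_alpha[OF i] j0 by (simp add: j_def)
    ultimately show ?thesis
      using top False j0 by (simp add: block_map_def compose_constk_left[OF phi] nec_norm_Pair j_def)
  qed
qed

context
  fixes As
  assumes dec: "is_decomp ns (length ms) As"
    and blk: "\<forall>i < length ns. blk_of As i = block_idx ns ms F i"
begin

private lemma blocks: "concat As = ns" "length As = length ms" "j < length ms \<Longrightarrow> As ! j \<noteq> []"
  using dec by (auto simp: is_decomp_def)

private lemma in_block:
  assumes "j < length ms" "i' < length (As ! j)"
  shows "blk_off As j + i' < length ns" "As ! j ! i' = ns ! (blk_off As j + i')"
    "block_idx ns ms F (blk_off As j + i') = j"
  using assms blocks blk blk_off_add_less_length[of j As i'] nth_concat_blk_off[of j As i']
    blk_of_blk_off_add[of j As i'] by simp_all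

private lemma block_idx_eq_imp_in_block:
  "i < length ns \<Longrightarrow> block_idx ns ms F i = j \<Longrightarrow> blk_off As j \<le> i \<and> i < blk_off As j + length (As ! j)"
  using blk blk_of_bounds[of i As] blocks by (auto simp: blk_off_Suc)

lemma block_first_alpha:
  assumes j: "j < length ms"
  shows "block_map ns ms F (blk_off As j) (alpha_v (ns ! blk_off As j)) = alpha_v (ms ! j)"
proof (cases "blk_off As j = 0")
  case True
  then show ?thesis using in_block[OF j, of 0] blocks(3)[OF j] block_first by simp
next
  case False
  have prev: "blk_off As j - 1 < length ns" "Suc (blk_off As j - 1) = blk_off As j"
    using False in_block(1)[OF j, of 0] blocks(3)[OF j] by simp_all
  have "block_idx ns ms F (blk_off As j - 1) \<noteq> j"
    using block_idx_eq_imp_in_block[OF prev(1)] False by auto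
  then show ?thesis
    using block_step[of "blk_off As j - 1"] prev in_block[OF j, of 0] blocks(3)[OF j] by auto
qed

lemma block_last_omega:
  assumes j: "j < length ms"
  defines "i \<equiv> blk_off As j + (length (As ! j) - 1)"
  shows "block_map ns ms F i (omega_v (ns ! i)) = omega_v (ms ! j)"
proof -
  have i: "i < length ns" "block_idx ns ms F i = j"
    using in_block[OF j, of "length (As ! j) - 1"] blocks(3)[OF j] by (simp_all add: i_def)
  show ?thesis
  proof (cases "Suc i < length ns")
    case True
    then have "block_idx ns ms F (Suc i) \<noteq> j"
      using block_idx_eq_imp_in_block[of "Suc i"] by (auto simp: i_def)
    then show ?thesis using block_step[OF True] i by auto
  next
    case False
    then have "i = length ns - 1" using i by simp
    then show ?thesis using block_last i by simp
  qed
qed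

lemma block_maps_cube_chain:
  assumes j: "j < length ms"
  shows "cube_chain (As ! j) (ms ! j) (block_maps ns ms F As j)"
proof -
  have glue: "block_map ns ms F (blk_off As j + i') (omega_v (ns ! (blk_off As j + i'))) =
      block_map ns ms F (blk_off As j + Suc i') (alpha_v (ns ! (blk_off As j + Suc i')))"
    if "Suc i' < length (As ! j)" for i'
    using block_step[of "blk_off As j + i'"] in_block[OF j, of i'] in_block[OF j, of "Suc i'"] that
    by auto
  have cm: "cmor (ns ! (blk_off As j + i')) (ms ! j) (block_map ns ms F (blk_off As j + i'))"
    if "i' < length (As ! j)" for i'
    using cmor_block_map[OF in_block(1)[OF j that]] in_block(3)[OF j that] by simp
  show ?thesis
    unfolding cube_chain_def block_maps_def
    using block_first_alpha[OF j] block_last_omega[OF j] glue in_block[OF j] cm blocks(3)[OF j]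
    by (simp add: last_conv_nth)
qed

end

lemma wedge_decomp_exists: "\<exists>As fs. wedge_decomp ns ms F As fs"
proof -
  note block_facts = block_first block_last block_step nec_mor_apply_block
  have "\<forall>i. Suc i < length ns \<longrightarrow> block_idx ns ms F (Suc i) = block_idx ns ms F i \<or>
      block_idx ns ms F (Suc i) = Suc (block_idx ns ms F i)"
    using block_facts(3) by blast
  then obtain As where dec: "is_decomp ns (Suc (block_idx ns ms F (length ns - 1))) As"
    and blk: "\<forall>i < length ns. blk_of As i = block_idx ns ms F i"
    using decomp_of_steps[OF ns_ne] block_facts(1) by blast
  then have dec: "is_decomp ns (length ms) As" using block_facts(2) ms_ne by simp
  then have As: "concat As = ns" "length As = length ms" by (simp_all add: is_decomp_def)
  define fs where "fs = map (\<lambda>j. star_maps (block_maps ns ms F As j)) [0..<length ms]"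
  have "nec_mor (As ! j) [ms ! j] (fs ! j)" if "j < length ms" for j
    using star_maps_nec_mor[OF _ block_maps_cube_chain[OF dec blk that]] dec that
    by (simp add: fs_def is_decomp_def)
  moreover have "nec_agree ns F (wedge_maps As ms fs)"
    unfolding nec_agree_def
  proof (intro allI ballI)
    fix k x assume x: "x \<in> nec_cells ns k"
    obtain i phi where x_eq: "x = (i, phi)" by (cases x)
    have i: "i < length ns" using x x_eq by (simp add: nec_cells_iff)
    have "blk_of As i < length ms" "i - blk_off As (blk_of As i) < length (As ! blk_of As i)"
      using i As blk_of_bounds(1)[of i As] nth_concat_blk_of(1)[of i As] by simp_all
    then have "wedge_maps As ms fs k x =
        nec_norm ms k (block_idx ns ms F i, compose (verts k) (block_map ns ms F i) phi)"
      using blk_of_bounds(2)[of i As] i As blk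
      by (simp add: x_eq wedge_maps_def bead_def fs_def star_maps_def block_maps_def)
    then show "F k x = wedge_maps As ms fs k x"
      using block_facts(4)[OF x[unfolded x_eq]] by (simp add: x_eq)
  qed
  moreover have "length fs = length ms" by (simp add: fs_def)
  ultimately show ?thesis
    using dec unfolding wedge_decomp_def by blast
qed

text \<open>Normalisation moves the image of a top cell to the next target bead only if it is
  constant.\<close>
lemma top_bead_eq_blk_of:
  assumes nonconst: "\<not> bead_restr_const ns ms F i" and W: "wedge_decomp ns ms F As fs" and i: "i < length ns"
  shows "top_bead ns F i = blk_of As i"
proof -
  define j where "j = blk_of As i"
  define p where "p = top_map (As ! j) (fs ! j) (i - blk_off As j)"
  have top: "(top_bead ns F i, top_map ns F i) = nec_norm ms (ns ! i) (j, p)"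
    using wedge_decomp_top_image[OF W i ns_pos_nth[OF i]] by (simp add: top_image j_def p_def)
  show ?thesis
  proof (cases "Suc j < length ms \<and> p = constk (ns ! i) (omega_v (ms ! j))")
    case True
    then have "top_map ns F i = constk (ns ! i) (alpha_v (ms ! Suc j))"
      using top by (simp add: nec_norm_Pair)
    then show ?thesis
      using bead_restr_const_if_top_map_constk[OF F i ns_pos_nth[OF i]] nonconst by blast
  qed (use top in \<open>auto simp: nec_norm_Pair j_def split: if_splits\<close>)
qed

lemma wedge_decomp_unique:
  assumes nonconst: "\<forall>i < length ns. \<not> bead_restr_const ns ms F i"
    and W: "wedge_decomp ns ms F As fs" and W': "wedge_decomp ns ms F As' fs'"
  shows "As = As' \<and> (\<forall>j < length ms. nec_agree (As ! j) (fs ! j) (fs' ! j))"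
proof -
  have dec: "concat As = ns" "length As = length ms" "concat As' = ns" "length As' = length ms"
    using W W' by (simp_all add: wedge_decomp_def is_decomp_def)
  have "As = As'"
    using top_bead_eq_blk_of[OF _ W] top_bead_eq_blk_of[OF _ W'] nonconst dec
    by (intro blocks_eqI) simp_all
  moreover have "nec_agree (As ! j) (fs ! j) (fs' ! j)" if j: "j < length ms" for j
    unfolding nec_agree_def
  proof (intro allI ballI)
    fix k y assume y: "y \<in> nec_cells (As ! j) k"
    obtain i' phi where y_eq: "y = (i', phi)" by (cases y)
    have i': "i' < length (As ! j)" using y y_eq by (simp add: nec_cells_iff)
    define i where "i = blk_off As j + i'"
    have i: "i < length ns" "blk_of As i = j" "As ! j ! i' = ns ! i"
      using blk_off_add_less_length[OF _ i'] blk_of_blk_off_add[OF _ i'] nth_concat_blk_off[OF _ i'] j dec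
      by (simp_all add: i_def)
    have mor: "nec_mor (As ! j) [ms ! j] (fs ! j)" "nec_mor (As ! j) [ms ! j] (fs' ! j)"
      using W W' j \<open>As = As'\<close> by (simp_all add: wedge_decomp_def)
    have pos: "0 < As ! j ! i'" using i ns_pos_nth by simp
    have "top_map (As ! j) (fs ! j) i' = top_map (As ! j) (fs' ! j) i'"
      using wedge_decomp_top_image[OF W i(1) ns_pos_nth[OF i(1)]]
        wedge_decomp_top_image[OF W' i(1) ns_pos_nth[OF i(1)]] i \<open>As = As'\<close>
      by (simp add: i_def nec_norm_eq_same_bead)
    moreover have "top_bead (As ! j) (fs ! j) i' = 0" "top_bead (As ! j) (fs' ! j) i' = 0"
      using top_bead_less[OF mor(1) i' pos] top_bead_less[OF mor(2) i' pos] by simp_all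
    ultimately show "(fs ! j) k y = (fs' ! j) k y"
      using nec_mor_apply[OF mor(1) y[unfolded y_eq] pos] nec_mor_apply[OF mor(2) y[unfolded y_eq] pos]
      by (simp add: y_eq)
  qed
  ultimately show ?thesis by blast
qed

end

theorem proposition2p2:
  shows "(\<forall>ns m F. ns \<noteq> [] \<and> (\<forall>n \<in> set ns. 0 < n) \<and> 0 < m \<and> nec_mor ns [m] F \<longrightarrow>
            (\<exists>!phis. length phis = length ns \<and>
                (\<forall>i < length ns. cmor (ns ! i) m (phis ! i)) \<and>
                (phis ! 0) (alpha_v (ns ! 0)) = alpha_v m \<and>
                (\<forall>i. Suc i < length ns \<longrightarrow>
                    (phis ! i) (omega_v (ns ! i)) = (phis ! Suc i) (alpha_v (ns ! Suc i))) \<and>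
                (phis ! (length ns - 1)) (omega_v (last ns)) = omega_v m \<and>
                nec_agree ns F (star_maps phis)) \<and>
            m \<le> sum_list ns)
       \<and> (\<forall>ns ms F. ns \<noteq> [] \<and> ms \<noteq> [] \<and> (\<forall>n \<in> set ns. 0 < n) \<and> (\<forall>m \<in> set ms. 0 < m) \<and>
              nec_mor ns ms F \<longrightarrow>
            (\<exists>As fs. wedge_decomp ns ms F As fs) \<and>
            ((\<forall>i < length ns. \<not> bead_restr_const ns ms F i) \<longrightarrow>
               (\<forall>As fs As' fs'. wedge_decomp ns ms F As fs \<and> wedge_decomp ns ms F As' fs' \<longrightarrow>
                   As = As' \<and> (\<forall>j < length ms. nec_agree (As ! j) (fs ! j) (fs' ! j)))))"
proof (intro conjI allI impI)
  fix ns m F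
  assume "ns \<noteq> [] \<and> (\<forall>n \<in> set ns. 0 < n) \<and> 0 < m \<and> nec_mor ns [m] F"
  then have ne: "ns \<noteq> []" and pos: "\<forall>n \<in> set ns. 0 < n" and F: "nec_mor ns [m] F" by simp_all
  show "\<exists>!phis. length phis = length ns \<and>
      (\<forall>i < length ns. cmor (ns ! i) m (phis ! i)) \<and>
      (phis ! 0) (alpha_v (ns ! 0)) = alpha_v m \<and>
      (\<forall>i. Suc i < length ns \<longrightarrow> (phis ! i) (omega_v (ns ! i)) = (phis ! Suc i) (alpha_v (ns ! Suc i))) \<and>
      (phis ! (length ns - 1)) (omega_v (last ns)) = omega_v m \<and>
      nec_agree ns F (star_maps phis)"
    using nec_mor_to_cube_ex1[OF ne pos F] by (simp add: cube_chain_def conj_assoc)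
  show "m \<le> sum_list ns"
    using cube_chain_dim_le[OF ne nec_mor_to_cube_chain[OF ne pos F]] .
next
  fix ns ms F
  assume "ns \<noteq> [] \<and> ms \<noteq> [] \<and> (\<forall>n \<in> set ns. 0 < n) \<and> (\<forall>m \<in> set ms. 0 < m) \<and> nec_mor ns ms F"
  then have hyps: "ns \<noteq> []" "ms \<noteq> []" "\<forall>n \<in> set ns. 0 < n" "\<forall>m \<in> set ms. 0 < m" "nec_mor ns ms F"
    by simp_all
  show "\<exists>As fs. wedge_decomp ns ms F As fs"
    using wedge_decomp_exists[OF hyps] .
  fix As fs As' fs' j
  assume "\<forall>i < length ns. \<not> bead_restr_const ns ms F i"
    and "wedge_decomp ns ms F As fs \<and> wedge_decomp ns ms F As' fs'"
  then have "As = As' \<and> (\<forall>j < length ms. nec_agree (As ! j) (fs ! j) (fs' ! j))"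
    using wedge_decomp_unique[OF hyps] by blast
  then show "As = As'" and "j < length ms \<Longrightarrow> nec_agree (As ! j) (fs ! j) (fs' ! j)"
    by blast+
qed

end
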